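(* Let $\alpha,\beta,\gamma\in\mathbb{H}$ be three distinct pairwise equivalent quaternions. Then for every integer $k\ge0$, $$\gamma^k=(\gamma-\beta)(\alpha-\beta)^{-1}\alpha^k+(\alpha-\gamma)(\alpha-\beta)^{-1}\beta^k.$$
   Context: $\mathbb{H}$ denotes the real quaternions. Two quaternions $\alpha,\beta$ are equivalent if $\alpha=q^{-1}\beta q$ for some nonzero $q\in\mathbb{H}$; equivalently, $\mathrm{Re}(\alpha)=\mathrm{Re}(\beta)$ and $|\alpha|=|\beta|$. *)

theory Defs
  imports Complex_Main
begin

codatatype quat = Quat (Re: real) (Im1: real) (Im2: real) (Im3: real)

lemma quat_eqI [intro?]:
  "Re x = Re y \<Longrightarrow> Im1 x = Im1 y \<Longrightarrow> Im2 x = Im2 y \<Longrightarrow> Im3 x = Im3 y \<Longrightarrow> x = y"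
  by (cases x, cases y) simp

instantiation quat :: "{ab_group_add, one, times, inverse}"
begin

primcorec zero_quat where
  "Re 0 = 0" | "Im1 0 = 0" | "Im2 0 = 0" | "Im3 0 = 0"

primcorec one_quat where
  "Re 1 = 1" | "Im1 1 = 0" | "Im2 1 = 0" | "Im3 1 = 0"

primcorec plus_quat where
  "Re (x + y) = Re x + Re y" | "Im1 (x + y) = Im1 x + Im1 y"
| "Im2 (x + y) = Im2 x + Im2 y" | "Im3 (x + y) = Im3 x + Im3 y"

primcorec uminus_quat where
  "Re (- x) = - Re x" | "Im1 (- x) = - Im1 x" | "Im2 (- x) = - Im2 x" | "Im3 (- x) = - Im3 x"

primcorec minus_quat where
  "Re (x - y) = Re x - Re y" | "Im1 (x - y) = Im1 x - Im1 y"
| "Im2 (x - y) = Im2 x - Im2 y" | "Im3 (x - y) = Im3 x - Im3 y"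

primcorec times_quat where
  "Re (x * y) = Re x * Re y - Im1 x * Im1 y - Im2 x * Im2 y - Im3 x * Im3 y"
| "Im1 (x * y) = Re x * Im1 y + Im1 x * Re y + Im2 x * Im3 y - Im3 x * Im2 y"
| "Im2 (x * y) = Re x * Im2 y - Im1 x * Im3 y + Im2 x * Re y + Im3 x * Im1 y"
| "Im3 (x * y) = Re x * Im3 y + Im1 x * Im2 y - Im2 x * Im1 y + Im3 x * Re y"

definition qnormsq :: "quat \<Rightarrow> real" where
  "qnormsq x = (Re x)\<^sup>2 + (Im1 x)\<^sup>2 + (Im2 x)\<^sup>2 + (Im3 x)\<^sup>2"

primcorec inverse_quat where
  "Re (inverse x) = Re x / qnormsq x"
| "Im1 (inverse x) = - Im1 x / qnormsq x"
| "Im2 (inverse x) = - Im2 x / qnormsq x"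
| "Im3 (inverse x) = - Im3 x / qnormsq x"

definition divide_quat :: "quat \<Rightarrow> quat \<Rightarrow> quat" where
  "divide_quat x y = x * inverse y"

instance by standard (auto intro: quat_eqI)

end

lemma qnormsq_eq_0: "qnormsq x = 0 \<longleftrightarrow> x = 0"
proof
  assume "qnormsq x = 0"
  then have "Re x = 0 \<and> Im1 x = 0 \<and> Im2 x = 0 \<and> Im3 x = 0"
    unfolding qnormsq_def by (smt (verit) power2_less_eq_zero_iff zero_le_power2)
  then show "x = 0" by (auto intro: quat_eqI)
qed (simp add: qnormsq_def)

instance quat :: division_ring
proof
  fix a b c :: quat
  show "a * b * c = a * (b * c)" by (rule quat_eqI) (simp_all add: algebra_simps)
  show "(a + b) * c = a * c + b * c" by (rule quat_eqI) (simp_all add: algebra_simps)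
  show "a * (b + c) = a * b + a * c" by (rule quat_eqI) (simp_all add: algebra_simps)
  show "1 * a = a" by (rule quat_eqI) simp_all
  show "a * 1 = a" by (rule quat_eqI) simp_all
  show "(0::quat) \<noteq> 1" by (metis one_quat.simps(1) zero_quat.simps(1) zero_neq_one)
  show "inverse (0::quat) = 0" by (rule quat_eqI) (simp_all add: qnormsq_def)
  show "a / b = a * inverse b" by (simp add: divide_quat_def)
next
  fix a :: quat assume "a \<noteq> 0"
  then have n: "qnormsq a \<noteq> 0" by (simp add: qnormsq_eq_0)
  have e: "(Re a)\<^sup>2 + (Im1 a)\<^sup>2 + (Im2 a)\<^sup>2 + (Im3 a)\<^sup>2 = qnormsq a"
    by (simp add: qnormsq_def)
  show "inverse a * a = 1"
    by (rule quat_eqI) (use n e in \<open>simp_all add: divide_simps, algebra+\<close>)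
  show "a * inverse a = 1"
    by (rule quat_eqI) (use n e in \<open>simp_all add: divide_simps, algebra+\<close>)
qed

definition qnorm :: "quat \<Rightarrow> real" where
  "qnorm x = sqrt (qnormsq x)"

definition quat_equiv :: "quat \<Rightarrow> quat \<Rightarrow> bool" where
  "quat_equiv a b \<longleftrightarrow> (\<exists>q. q \<noteq> 0 \<and> a = inverse q * b * q)"

end

theory Submission
  imports Defs
begin

(* Every quaternion x satisfies the real quadratic relation
     x^2 = 2 Re(x) x - |x|^2,
   so by induction x^k = a_k x + b_k, where the real coefficients a_k, b_k depend
   only on Re(x) and |x|^2.  Equivalent quaternions share these two invariants, so
   alpha, beta, gamma have their k-th powers given by ONE real-affine map
   p(x) = a x + b.  Real scalars are central in H, hence p commutes with affine
   combinations u x + v y with u + v = 1, even for quaternionic weights u, v.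
   Finally gamma = u alpha + v beta for the weights
   u = (gamma - beta)(alpha - beta)^-1 and v = (alpha - gamma)(alpha - beta)^-1,
   which sum to 1; applying p gives the formula. *)

definition qreal :: "real \<Rightarrow> quat" where
  "qreal r = Quat r 0 0 0"

text \<open>Real scalars are central; this is what lets real-affine maps pass through
  quaternionic weights.\<close>
lemma qreal_commute: "qreal r * x = x * qreal r"
  by (rule quat_eqI) (simp_all add: qreal_def)

lemma qreal_add: "qreal (r + s) = qreal r + qreal s"
  by (rule quat_eqI) (simp_all add: qreal_def)

lemma qreal_mult: "qreal r * qreal s = qreal (r * s)"
  by (rule quat_eqI) (simp_all add: qreal_def)

lemma qreal_uminus: "qreal (- r) = - qreal r"
  by (rule quat_eqI) (simp_all add: qreal_def)

lemma quat_square: "x * x = qreal (2 * Re x) * x - qreal (qnormsq x)"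
  by (rule quat_eqI) (simp_all add: qreal_def qnormsq_def power2_eq_square algebra_simps)

lemma Re_mult_commute: "Re (x * y) = Re (y * x)"
  by (simp add: algebra_simps)

lemma qnormsq_mult: "qnormsq (x * y) = qnormsq x * qnormsq y"
  by (simp add: qnormsq_def power2_eq_square algebra_simps)

lemma quat_equiv_invariants:
  assumes "quat_equiv a b"
  shows "Re a = Re b" and "qnormsq a = qnormsq b"
proof -
  obtain q where q: "q \<noteq> 0" and a: "a = inverse q * (b * q)"
    using assms by (auto simp: quat_equiv_def mult.assoc)
  have "Re a = Re (b * q * inverse q)"
    unfolding a by (rule Re_mult_commute)
  also have "\<dots> = Re b"
    using q by (simp add: mult.assoc)
  finally show "Re a = Re b" .
  have "qnormsq (inverse q) * qnormsq q = qnormsq (inverse q * q)"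
    by (simp add: qnormsq_mult)
  also have "\<dots> = 1"
    using q by (simp add: qnormsq_def)
  finally have "qnormsq (inverse q) * qnormsq q = 1" .
  then show "qnormsq a = qnormsq b"
    unfolding a by (simp add: qnormsq_mult)
qed

text \<open>The coefficients \<open>(a\<^sub>k, b\<^sub>k)\<close> with \<open>x\<^sup>k = a\<^sub>k x + b\<^sub>k\<close>, for a quaternion with
  real part \<open>r\<close> and squared norm \<open>n\<close>; the recursion is multiplication by \<open>x\<close>
  followed by the quadratic relation.\<close>
fun power_coeffs :: "real \<Rightarrow> real \<Rightarrow> nat \<Rightarrow> real \<times> real" where
  "power_coeffs r n 0 = (0, 1)"
| "power_coeffs r n (Suc k) =
     (let (a, b) = power_coeffs r n k in (2 * r * a + b, - n * a))"

lemma power_affine: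
  fixes x :: quat and k :: nat
  defines "c \<equiv> power_coeffs (Re x) (qnormsq x) k"
  shows "x ^ k = qreal (fst c) * x + qreal (snd c)"
  unfolding c_def
proof (induction k)
  case 0
  show ?case by (rule quat_eqI) (simp_all add: qreal_def)
next
  case (Suc k)
  obtain a b where ab: "power_coeffs (Re x) (qnormsq x) k = (a, b)"
    by fastforce
  have "x ^ Suc k = x * (qreal a * x + qreal b)"
    using Suc ab by simp
  also have "\<dots> = qreal a * (x * x) + qreal b * x"
    by (metis distrib_left mult.assoc qreal_commute)
  also have "\<dots> = qreal (2 * Re x * a + b) * x + qreal (- qnormsq x * a)"
    unfolding quat_square
    by (simp add: algebra_simps qreal_add qreal_uminus qreal_mult[symmetric])
  finally show ?case
    using ab by simp
qed

lemma affine_combination: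
  assumes "u + v = 1"
  shows "u * (qreal a * x + qreal b) + v * (qreal a * y + qreal b)
       = qreal a * (u * x + v * y) + qreal b"
proof -
  have distrib: "w * (qreal a * z + qreal b) = qreal a * (w * z) + qreal b * w" for w z
    by (metis distrib_left mult.assoc qreal_commute)
  have "u * (qreal a * x + qreal b) + v * (qreal a * y + qreal b)
      = qreal a * (u * x + v * y) + qreal b * (u + v)"
    unfolding distrib by (simp add: distrib_left)
  then show ?thesis
    using assms by simp
qed

lemma affine_weights:
  fixes \<alpha> \<beta> \<gamma> :: quat
  assumes "\<alpha> \<noteq> \<beta>"
  defines "u \<equiv> (\<gamma> - \<beta>) * inverse (\<alpha> - \<beta>)"
    and "v \<equiv> (\<alpha> - \<gamma>) * inverse (\<alpha> - \<beta>)"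
  shows "u + v = 1" and "u * \<alpha> + v * \<beta> = \<gamma>"
proof -
  have d: "\<alpha> - \<beta> \<noteq> 0"
    using assms(1) by simp
  have "u + v = (\<alpha> - \<beta>) * inverse (\<alpha> - \<beta>)"
    unfolding u_def v_def by (simp add: algebra_simps)
  then show uv: "u + v = 1"
    using d by simp
  have "u * \<alpha> + v * \<beta> = (u + v) * \<beta> + u * (\<alpha> - \<beta>)"
    by (simp add: algebra_simps)
  also have "u * (\<alpha> - \<beta>) = \<gamma> - \<beta>"
    unfolding u_def using d by (simp add: mult.assoc)
  finally show "u * \<alpha> + v * \<beta> = \<gamma>"
    using uv by simp
qed

theorem mainTheorem4:
  fixes \<alpha> \<beta> \<gamma> :: quat and k :: nat
  assumes "\<alpha> \<noteq> \<beta>" "\<beta> \<noteq> \<gamma>" "\<alpha> \<noteq> \<gamma>"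
    and "quat_equiv \<alpha> \<beta>" "quat_equiv \<beta> \<gamma>" "quat_equiv \<alpha> \<gamma>"
  shows "\<gamma> ^ k = (\<gamma> - \<beta>) * inverse (\<alpha> - \<beta>) * \<alpha> ^ k + (\<alpha> - \<gamma>) * inverse (\<alpha> - \<beta>) * \<beta> ^ k"
proof -
  define c where "c = power_coeffs (Re \<alpha>) (qnormsq \<alpha>) k"
  define p where "p x = qreal (fst c) * x + qreal (snd c)" for x
  have "x ^ k = p x" if "x = \<alpha> \<or> quat_equiv \<alpha> x" for x
    using power_affine[of x k] quat_equiv_invariants[of \<alpha> x] that
    unfolding p_def c_def by auto
  then have pow: "\<alpha> ^ k = p \<alpha>" "\<beta> ^ k = p \<beta>" "\<gamma> ^ k = p \<gamma>"
    using assms(4,6) by auto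
  note weights = affine_weights[OF assms(1), of \<gamma>]
  show ?thesis
    unfolding pow p_def affine_combination[OF weights(1)] weights(2) ..
qed

end
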